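(* Let $G=(V,E)$ be a connected graph with $n$ vertices and let $t$ be a positive integer. Then $G$ is acyclic if and only if it admits a correct acyclicity labeling (with block length $t$).
   Context: An acyclicity label of a vertex $v$ consists of: an orientation label $a(v)\in\{0,1,2\}$; a block label $b(v)\in\{\textsc{head},\textsc{mid},\textsc{tail}\}$; a block color $c(v)\in\{0,1\}$; and a distance label $d(v)\in\{0,1\}^{(\log n)/t}$. The labeling is correct if all four of the following hold. (Orientation) Every $v$ has at most one neighbor $P(v)$ (its parent) with $a(P(v))\equiv a(v)-1\pmod 3$, and all other neighbors $w$ (its children) satisfy $a(w)\equiv a(v)+1\pmod 3$; if $v$ has no parent, write $P(v)=\varnothing$ and call $v$ a root. Edges are oriented from parent to child. (Block labels) (1) $b(v)=\textsc{head}$ iff $P(v)=\varnothing$ or $b(P(v))=\textsc{tail}$; (2) $b(v)=\textsc{tail}$ iff there is an oriented path $v_0,v_1,\dots,v_{t-1}=v$ of $t$ vertices with $b(v_0)=\textsc{head}$ — such a path is called a block; (3) otherwise $b(v)=\textsc{mid}$; (4) for every $v$ there is an oriented path $w_0,\dots,w_{k-1}=v$ with $k<t$ and $b(w_0)=\textsc{head}$. For a block $B=(v_0,\dots,v_{t-1})$, its value $D(B)$ is the integer whose binary expansion is the concatenation $d(v_{t-1})d(v_{t-2})\cdots d(v_0)$. A block $B=(v_0,\dots,v_{t-1})$ is the parent of a block $B'=(w_0,\dots,w_{t-1})$ if $P(w_0)=v_{t-1}$. (Block coloring) all vertices in a block have the same color, and if $B$ is the parent of $B'$ then vertices of $B$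 and $B'$ have different colors. (Distance labels) for every block $B=(v_0,\dots,v_{t-1})$, $D(B)=0$ iff $v_0$ is a root; and whenever $B$ is the parent of $B'$, $D(B')=D(B)+t$. *)

theory Defs
  imports Complex_Main
begin

definition simple_graph :: "'a set \<Rightarrow> ('a \<Rightarrow> 'a \<Rightarrow> bool) \<Rightarrow> bool" where
  "simple_graph V E \<longleftrightarrow> finite V \<and> (\<forall>u v. E u v \<longrightarrow> E v u) \<and> (\<forall>v. \<not> E v v)
     \<and> (\<forall>u v. E u v \<longrightarrow> u \<in> V \<and> v \<in> V)"

definition connected_graph :: "'a set \<Rightarrow> ('a \<Rightarrow> 'a \<Rightarrow> bool) \<Rightarrow> bool" where
  "connected_graph V E \<longleftrightarrow> (\<forall>u\<in>V. \<forall>v\<in>V. E\<^sup>*\<^sup>* u v)"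

definition is_cycle :: "'a set \<Rightarrow> ('a \<Rightarrow> 'a \<Rightarrow> bool) \<Rightarrow> 'a list \<Rightarrow> bool" where
  "is_cycle V E cs \<longleftrightarrow> 3 \<le> length cs \<and> distinct cs \<and> set cs \<subseteq> V
     \<and> (\<forall>i < length cs. E (cs ! i) (cs ! ((i + 1) mod length cs)))"

definition acyclic_graph :: "'a set \<Rightarrow> ('a \<Rightarrow> 'a \<Rightarrow> bool) \<Rightarrow> bool" where
  "acyclic_graph V E \<longleftrightarrow> \<not> (\<exists>cs. is_cycle V E cs)"

datatype block_label = Head | Mid | Tail

definition is_parent :: "('a \<Rightarrow> 'a \<Rightarrow> bool) \<Rightarrow> ('a \<Rightarrow> nat) \<Rightarrow> 'a \<Rightarrow> 'a \<Rightarrow> bool" where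
  "is_parent E a v w \<longleftrightarrow> E v w \<and> (a w + 1) mod 3 = a v"

definition is_root :: "('a \<Rightarrow> 'a \<Rightarrow> bool) \<Rightarrow> ('a \<Rightarrow> nat) \<Rightarrow> 'a \<Rightarrow> bool" where
  "is_root E a v \<longleftrightarrow> \<not> (\<exists>w. is_parent E a v w)"

definition oriented_path :: "'a set \<Rightarrow> ('a \<Rightarrow> 'a \<Rightarrow> bool) \<Rightarrow> ('a \<Rightarrow> nat) \<Rightarrow> 'a list \<Rightarrow> bool" where
  "oriented_path V E a ps \<longleftrightarrow> ps \<noteq> [] \<and> set ps \<subseteq> V
     \<and> (\<forall>i. Suc i < length ps \<longrightarrow> is_parent E a (ps ! Suc i) (ps ! i))"

definition orientation_ok :: "'a set \<Rightarrow> ('a \<Rightarrow> 'a \<Rightarrow> bool) \<Rightarrow> ('a \<Rightarrow> nat) \<Rightarrow> bool" where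
  "orientation_ok V E a \<longleftrightarrow> (\<forall>v\<in>V. a v < 3
     \<and> (\<forall>w1 w2. is_parent E a v w1 \<and> is_parent E a v w2 \<longrightarrow> w1 = w2)
     \<and> (\<forall>w. E v w \<and> \<not> is_parent E a v w \<longrightarrow> a w = (a v + 1) mod 3))"

definition is_block :: "'a set \<Rightarrow> ('a \<Rightarrow> 'a \<Rightarrow> bool) \<Rightarrow> nat \<Rightarrow> ('a \<Rightarrow> nat) \<Rightarrow> ('a \<Rightarrow> block_label)
     \<Rightarrow> 'a list \<Rightarrow> bool" where
  "is_block V E t a b B \<longleftrightarrow> oriented_path V E a B \<and> length B = t \<and> b (hd B) = Head"

definition block_labels_ok :: "'a set \<Rightarrow> ('a \<Rightarrow> 'a \<Rightarrow> bool) \<Rightarrow> nat \<Rightarrow> ('a \<Rightarrow> nat)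
     \<Rightarrow> ('a \<Rightarrow> block_label) \<Rightarrow> bool" where
  "block_labels_ok V E t a b \<longleftrightarrow> (\<forall>v\<in>V.
       (b v = Head \<longleftrightarrow> is_root E a v \<or> (\<exists>w. is_parent E a v w \<and> b w = Tail))
     \<and> (b v = Tail \<longleftrightarrow> (\<exists>ps. is_block V E t a b ps \<and> last ps = v))
     \<and> (b v = Mid \<longleftrightarrow> \<not> (b v = Head) \<and> \<not> (b v = Tail))
     \<and> (\<exists>ps. oriented_path V E a ps \<and> length ps \<le> t \<and> last ps = v \<and> b (hd ps) = Head))"

definition bits_val :: "bool list \<Rightarrow> nat" where
  "bits_val bs = foldl (\<lambda>acc x. 2 * acc + (if x then 1 else 0)) 0 bs"

definition block_value :: "('a \<Rightarrow> bool list) \<Rightarrow> 'a list \<Rightarrow> nat" where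
  "block_value d B = bits_val (concat (map d (rev B)))"

definition block_parent :: "('a \<Rightarrow> 'a \<Rightarrow> bool) \<Rightarrow> ('a \<Rightarrow> nat) \<Rightarrow> 'a list \<Rightarrow> 'a list \<Rightarrow> bool" where
  "block_parent E a B B' \<longleftrightarrow> is_parent E a (hd B') (last B)"

definition block_coloring_ok :: "'a set \<Rightarrow> ('a \<Rightarrow> 'a \<Rightarrow> bool) \<Rightarrow> nat \<Rightarrow> ('a \<Rightarrow> nat)
     \<Rightarrow> ('a \<Rightarrow> block_label) \<Rightarrow> ('a \<Rightarrow> bool) \<Rightarrow> bool" where
  "block_coloring_ok V E t a b c \<longleftrightarrow>
     (\<forall>B. is_block V E t a b B \<longrightarrow> (\<forall>u\<in>set B. \<forall>u'\<in>set B. c u = c u'))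
   \<and> (\<forall>B B'. is_block V E t a b B \<and> is_block V E t a b B' \<and> block_parent E a B B'
        \<longrightarrow> (\<forall>u\<in>set B. \<forall>u'\<in>set B'. c u \<noteq> c u'))"

definition dist_label_len :: "nat \<Rightarrow> nat \<Rightarrow> nat" where
  "dist_label_len n t = nat \<lceil>log 2 (real n) / real t\<rceil>"

definition distance_labels_ok :: "'a set \<Rightarrow> ('a \<Rightarrow> 'a \<Rightarrow> bool) \<Rightarrow> nat \<Rightarrow> ('a \<Rightarrow> nat)
     \<Rightarrow> ('a \<Rightarrow> block_label) \<Rightarrow> ('a \<Rightarrow> bool list) \<Rightarrow> bool" where
  "distance_labels_ok V E t a b d \<longleftrightarrow>
     (\<forall>v\<in>V. length (d v) = dist_label_len (card V) t)
   \<and> (\<forall>B. is_block V E t a b B \<longrightarrow> (block_value d B = 0 \<longleftrightarrow> is_root E a (hd B)))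
   \<and> (\<forall>B B'. is_block V E t a b B \<and> is_block V E t a b B' \<and> block_parent E a B B'
        \<longrightarrow> block_value d B' = block_value d B + t)"

definition correct_acyclicity_labeling :: "'a set \<Rightarrow> ('a \<Rightarrow> 'a \<Rightarrow> bool) \<Rightarrow> nat
     \<Rightarrow> ('a \<Rightarrow> nat) \<Rightarrow> ('a \<Rightarrow> block_label) \<Rightarrow> ('a \<Rightarrow> bool) \<Rightarrow> ('a \<Rightarrow> bool list) \<Rightarrow> bool" where
  "correct_acyclicity_labeling V E t a b c d \<longleftrightarrow>
     orientation_ok V E a \<and> block_labels_ok V E t a b
   \<and> block_coloring_ok V E t a b c \<and> distance_labels_ok V E t a b d"

end

theory Submission
  imports Defs
begin

(*
  A tree is labelled by depth from an arbitrary root r (the depth function is built by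
  stripping leaves): the orientation label is the depth mod 3, the root paths are cut into
  blocks of t consecutive depths, and the depth of a block's head, which is below
  n <= 2^(tL) with L the length of the distance labels, is written in base 2^L across the
  t vertices of the block.

  Conversely, along a cycle the orientation rule forces every edge to point the same way,
  so the cycle yields a periodic infinite chain of parents.  The block labels tile this
  chain into consecutive blocks whose values increase by t from each block to the next,
  which periodicity forbids.
*)

section \<open>Trees\<close>

definition simple_path :: "'a set \<Rightarrow> ('a \<Rightarrow> 'a \<Rightarrow> bool) \<Rightarrow> 'a list \<Rightarrow> bool" where
  "simple_path V E ps \<longleftrightarrow> distinct ps \<and> set ps \<subseteq> V
     \<and> (\<forall>i. Suc i < length ps \<longrightarrow> E (ps ! i) (ps ! Suc i))"

lemma simple_path_length_le_card:
  "finite V \<Longrightarrow> simple_path V E ps \<Longrightarrow> length ps \<le> card V"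
  unfolding simple_path_def by (metis card_mono distinct_card)

lemma simple_path_snoc:
  assumes "simple_path V E ps" "ps \<noteq> []" "E (last ps) q" "q \<in> V" "q \<notin> set ps"
  shows "simple_path V E (ps @ [q])"
  unfolding simple_path_def
proof (intro conjI allI impI)
  show "distinct (ps @ [q])" "set (ps @ [q]) \<subseteq> V"
    using assms by (auto simp: simple_path_def)
  fix i assume "Suc i < length (ps @ [q])"
  then consider "Suc i < length ps" | "i = length ps - 1" by fastforce
  then show "E ((ps @ [q]) ! i) ((ps @ [q]) ! Suc i)"
    by cases (use assms in \<open>auto simp: simple_path_def nth_append last_conv_nth\<close>)
qed

lemma simple_path_close_cycle:
  assumes p: "simple_path V E ps" and i: "i + 3 \<le> length ps" and e: "E (last ps) (ps ! i)"
  shows "is_cycle V E (drop i ps)"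
  unfolding is_cycle_def
proof (intro conjI allI impI)
  let ?cs = "drop i ps"
  show "3 \<le> length ?cs" "distinct ?cs" "set ?cs \<subseteq> V"
    using p i by (auto simp: simple_path_def dest: in_set_dropD)
  fix j assume j: "j < length ?cs"
  show "E (?cs ! j) (?cs ! ((j + 1) mod length ?cs))"
  proof (cases "j + 1 < length ?cs")
    case True
    then show ?thesis using p by (simp add: simple_path_def)
  next
    case False
    then have "Suc j = length ?cs" "i + j = length ps - 1" "ps \<noteq> []" using j i by auto
    then have "?cs ! j = last ps" "(j + 1) mod length ?cs = 0"
      by (simp_all add: last_conv_nth)
    then show ?thesis using e i by simp
  qed
qed

lemma acyclic_graph_has_leaf:
  assumes sg: "simple_graph V E" and cg: "connected_graph V E" and ac: "acyclic_graph V E"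
    and two: "2 \<le> card V"
  shows "\<exists>l\<in>V. \<exists>p. E l p \<and> (\<forall>q. E l q \<longrightarrow> q = p)"
proof -
  have fin: "finite V" and sym: "\<And>u v. E u v \<Longrightarrow> E v u" and irr: "\<And>v. \<not> E v v"
    and inV: "\<And>u v. E u v \<Longrightarrow> u \<in> V \<and> v \<in> V"
    using sg by (auto simp: simple_graph_def)
  obtain u v where "u \<in> V" "v \<in> V" "u \<noteq> v"
    using two fin by (metis One_nat_def card_le_Suc0_iff_eq not_less_eq_eq numeral_2_eq_2)
  with cg obtain w where "E u w"
    by (metis connected_graph_def converse_rtranclpE)
  then have "simple_path V E [u, w]"
    using inV irr by (auto simp: simple_path_def less_Suc_eq)
  moreover have "\<forall>ps. simple_path V E ps \<longrightarrow> length ps < Suc (card V)"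
    using simple_path_length_le_card[OF fin] by (simp add: le_imp_less_Suc)
  ultimately obtain ps where ps: "simple_path V E ps"
    and longest: "\<And>qs. simple_path V E qs \<Longrightarrow> length qs \<le> length ps"
    using ex_has_greatest_nat[of "simple_path V E" "[u, w]" length] by blast
  have len: "2 \<le> length ps" using longest[OF \<open>simple_path V E [u, w]\<close>] by simp
  define x p where "x = last ps" and "p = ps ! (length ps - 2)"
  have ne: "ps \<noteq> []" using len by auto
  then have x_nth: "x = ps ! (length ps - 1)" by (simp add: x_def last_conv_nth)
  have "E p x"
  proof -
    have "Suc (length ps - 2) < length ps" "Suc (length ps - 2) = length ps - 1"
      using len by auto
    then show ?thesis
      using ps len unfolding simple_path_def x_def p_def
      by (metis last_conv_nth list.size(3) not_numeral_le_zero)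
  qed
  have "q = p" if "E x q" for q
  proof (cases "q \<in> set ps")
    case False
    then have "simple_path V E (ps @ [q])"
      using simple_path_snoc[OF ps ne] inV[OF that] that by (simp add: x_def)
    then show ?thesis using longest by fastforce
  next
    case True
    then obtain i where i: "i < length ps" "q = ps ! i" by (auto simp: in_set_conv_nth)
    have "i \<noteq> length ps - 1"
      using irr[of x] that i x_nth by auto
    moreover have "\<not> i + 3 \<le> length ps"
      using simple_path_close_cycle[OF ps] that i ac by (auto simp: acyclic_graph_def x_def)
    ultimately have "i = length ps - 2" using i by linarith
    then show ?thesis using i by (simp add: p_def)
  qed
  moreover have "x \<in> V" using ps ne by (auto simp: simple_path_def x_def)
  ultimately show ?thesis using sym[OF \<open>E p x\<close>] by blast
qed

definition rooted_depth :: "'a set \<Rightarrow> ('a \<Rightarrow> 'a \<Rightarrow> bool) \<Rightarrow> 'a \<Rightarrow> ('a \<Rightarrow> nat) \<Rightarrow> bool" where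
  "rooted_depth V E r dep \<longleftrightarrow> r \<in> V \<and> dep r = 0
     \<and> (\<forall>u v. E u v \<longrightarrow> dep u = dep v + 1 \<or> dep v = dep u + 1)
     \<and> (\<forall>v\<in>V. v \<noteq> r \<longrightarrow> (\<exists>!w. E v w \<and> dep w + 1 = dep v))"

lemma simple_graph_remove_vertex:
  "simple_graph V E \<Longrightarrow> simple_graph (V - {l}) (\<lambda>u v. E u v \<and> u \<noteq> l \<and> v \<noteq> l)"
  by (auto simp: simple_graph_def)

lemma acyclic_graph_remove_vertex:
  "acyclic_graph V E \<Longrightarrow> acyclic_graph (V - {l}) (\<lambda>u v. E u v \<and> u \<noteq> l \<and> v \<noteq> l)"
  unfolding acyclic_graph_def is_cycle_def by blast

lemma connected_graph_remove_leaf: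
  assumes sg: "simple_graph V E" and cg: "connected_graph V E"
    and leaf: "\<And>q. E l q \<longleftrightarrow> q = p" and "p \<noteq> l"
  shows "connected_graph (V - {l}) (\<lambda>u v. E u v \<and> u \<noteq> l \<and> v \<noteq> l)"
proof -
  define E' where "E' u v \<longleftrightarrow> E u v \<and> u \<noteq> l \<and> v \<noteq> l" for u v
  have leaf': "E q l \<longleftrightarrow> q = p" for q using sg leaf by (auto simp: simple_graph_def)
  \<comment> \<open>A walk from u through the leaf l must enter and leave l via p.\<close>
  have "(x \<noteq> l \<longrightarrow> E'\<^sup>*\<^sup>* u x) \<and> (x = l \<longrightarrow> E'\<^sup>*\<^sup>* u p)" if "E\<^sup>*\<^sup>* u x" "u \<noteq> l" for u x
    using that(1)
  proof (induction rule: rtranclp_induct)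
    case (step y z)
    then show ?case
      using that(2) leaf leaf' \<open>p \<noteq> l\<close>
      by (cases "y = l"; cases "z = l") (auto simp: E'_def intro: rtranclp.rtrancl_into_rtrancl)
  qed (use that(2) in simp)
  then show ?thesis
    using cg unfolding connected_graph_def E'_def[symmetric] by blast
qed

lemma rooted_depth_add_leaf:
  assumes rd: "rooted_depth (V - {l}) (\<lambda>u v. E u v \<and> u \<noteq> l \<and> v \<noteq> l) r dep"
    and sym: "\<And>u v. E u v \<Longrightarrow> E v u" and "l \<in> V" and leaf: "\<And>q. E l q \<longleftrightarrow> q = p" and "p \<noteq> l"
  shows "rooted_depth V E r (dep(l := dep p + 1))"
proof -
  let ?dep = "dep(l := dep p + 1)"
  have r: "r \<in> V" "r \<noteq> l" "dep r = 0" using rd unfolding rooted_depth_def by blast+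
  have leaf': "E q l \<longleftrightarrow> q = p" for q using sym leaf by blast
  have "?dep u = ?dep v + 1 \<or> ?dep v = ?dep u + 1" if "E u v" for u v
  proof -
    have "dep u = dep v + 1 \<or> dep v = dep u + 1" if "u \<noteq> l" "v \<noteq> l"
      using rd \<open>E u v\<close> that unfolding rooted_depth_def by blast
    then show ?thesis using that leaf leaf' \<open>p \<noteq> l\<close> by (cases "u = l"; cases "v = l") auto
  qed
  moreover have "\<exists>!w. E v w \<and> ?dep w + 1 = ?dep v" if "v \<in> V" "v \<noteq> r" for v
  proof (cases "v = l")
    case True
    then show ?thesis using leaf \<open>p \<noteq> l\<close> by auto
  next
    case False
    have "v \<in> V - {l}" using that False by simp
    then have "\<exists>!w. (E v w \<and> v \<noteq> l \<and> w \<noteq> l) \<and> dep w + 1 = dep v"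
      using rd that(2) unfolding rooted_depth_def by blast
    moreover have "E v w \<and> ?dep w + 1 = ?dep v \<longleftrightarrow> (E v w \<and> v \<noteq> l \<and> w \<noteq> l) \<and> dep w + 1 = dep v"
      for w using False leaf' by auto
    ultimately show ?thesis by simp
  qed
  ultimately show ?thesis using r by (simp add: rooted_depth_def)
qed

lemma tree_has_rooted_depth:
  "simple_graph V E \<Longrightarrow> connected_graph V E \<Longrightarrow> acyclic_graph V E \<Longrightarrow> V \<noteq> {}
   \<Longrightarrow> \<exists>r dep. rooted_depth V E r dep"
proof (induction "card V" arbitrary: V E rule: less_induct)
  case less
  have fin: "finite V" and sym: "\<And>u v. E u v \<Longrightarrow> E v u" and irr: "\<And>v. \<not> E v v"
    and inV: "\<And>u v. E u v \<Longrightarrow> u \<in> V \<and> v \<in> V"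
    using less.prems(1) by (auto simp: simple_graph_def)
  show ?case
  proof (cases "2 \<le> card V")
    case False
    moreover have "card V \<noteq> 0" using less.prems(4) fin by simp
    ultimately have "card V = 1" by linarith
    then obtain r where "V = {r}" by (rule card_1_singletonE)
    then have "rooted_depth V E r (\<lambda>_. 0)" using inV irr unfolding rooted_depth_def by blast
    then show ?thesis by blast
  next
    case True
    then obtain l p where l: "l \<in> V" "E l p" and leaf: "\<And>q. E l q \<Longrightarrow> q = p"
      using acyclic_graph_has_leaf[OF less.prems(1-3)] by blast
    have leaf_iff: "E l q \<longleftrightarrow> q = p" for q using l leaf by blast
    have "p \<noteq> l" "p \<in> V - {l}" using l irr inV by blast+
    moreover have "card (V - {l}) < card V" using fin l by (meson Diff_iff card_Diff1_less insertI1)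
    ultimately obtain r dep where "rooted_depth (V - {l}) (\<lambda>u v. E u v \<and> u \<noteq> l \<and> v \<noteq> l) r dep"
      using less.hyps[OF _ simple_graph_remove_vertex connected_graph_remove_leaf
          acyclic_graph_remove_vertex] less.prems leaf_iff by blast
    then have "rooted_depth V E r (dep(l := dep p + 1))"
      by (rule rooted_depth_add_leaf[where E = E, OF _ sym l(1) leaf_iff \<open>p \<noteq> l\<close>])
    then show ?thesis by blast
  qed
qed

section \<open>Binary digits\<close>

fun nat_to_bits :: "nat \<Rightarrow> nat \<Rightarrow> bool list" where
  "nat_to_bits 0 x = []"
| "nat_to_bits (Suc L) x = nat_to_bits L (x div 2) @ [odd x]"

lemma length_nat_to_bits [simp]: "length (nat_to_bits L x) = L"
  by (induction L arbitrary: x) auto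

lemma bits_val_Nil [simp]: "bits_val [] = 0"
  by (simp add: bits_val_def)

lemma bits_val_snoc: "bits_val (xs @ [x]) = 2 * bits_val xs + of_bool x"
  by (simp add: bits_val_def)

lemma bits_val_append: "bits_val (xs @ ys) = bits_val xs * 2 ^ length ys + bits_val ys"
  by (induction ys rule: rev_induct) (simp_all add: bits_val_snoc flip: append_assoc)

lemma bits_val_nat_to_bits: "bits_val (nat_to_bits L x) = x mod 2 ^ L"
proof (induction L arbitrary: x)
  case (Suc L)
  have "bits_val (nat_to_bits (Suc L) x) = 2 * ((x div 2) mod 2 ^ L) + x mod 2"
    by (simp add: bits_val_snoc Suc odd_iff_mod_2_eq_one)
  also have "\<dots> = x mod 2 ^ Suc L" by (simp add: mod_mult2_eq)
  finally show ?case .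
qed simp

lemma bits_val_concat_digits:
  "bits_val (concat (rev (map (\<lambda>i. nat_to_bits L (N div 2 ^ (L * i))) [0..<j])))
     = N mod 2 ^ (L * j)"
proof (induction j)
  case (Suc j)
  have "length (concat (rev (map (\<lambda>i. nat_to_bits L (N div 2 ^ (L * i))) [0..<j]))) = L * j"
    by (induction j) auto
  then have "bits_val (concat (rev (map (\<lambda>i. nat_to_bits L (N div 2 ^ (L * i))) [0..<Suc j])))
      = (N div 2 ^ (L * j)) mod 2 ^ L * 2 ^ (L * j) + N mod 2 ^ (L * j)"
    by (simp add: bits_val_append bits_val_nat_to_bits Suc)
  also have "\<dots> = N mod (2 ^ (L * j) * 2 ^ L)"
    by (simp add: mod_mult2_eq)
  also have "\<dots> = N mod 2 ^ (L * Suc j)"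
    by (metis mult_Suc_right add.commute power_add)
  finally show ?case .
qed simp

lemma le_two_pow_dist_label_len:
  assumes "1 \<le> n" "1 \<le> t"
  shows "n \<le> 2 ^ (dist_label_len n t * t)"
proof -
  have "log 2 n / t \<le> dist_label_len n t"
    using assms by (simp add: dist_label_len_def le_of_int_ceiling)
  then have "log 2 n \<le> dist_label_len n t * t"
    using assms by (simp add: divide_le_eq)
  then have "real n \<le> 2 powr real (dist_label_len n t * t)"
    using assms by (simp add: log_le_iff del: of_nat_mult)
  also have "\<dots> = real (2 ^ (dist_label_len n t * t))"
    by (subst powr_realpow) simp_all
  finally show ?thesis by linarith
qed

lemma oriented_path_singleton [simp]: "oriented_path V E a [v] \<longleftrightarrow> v \<in> V"
  by (simp add: oriented_path_def)

lemma oriented_path_snoc: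
  "xs \<noteq> [] \<Longrightarrow> oriented_path V E a (xs @ [x])
     \<longleftrightarrow> oriented_path V E a xs \<and> x \<in> V \<and> is_parent E a x (last xs)"
  unfolding oriented_path_def
  by (auto simp: nth_append last_conv_nth less_Suc_eq) (metis diff_Suc_Suc diff_zero)

lemma orientation_ok_parent_unique:
  "orientation_ok V E a \<Longrightarrow> v \<in> V \<Longrightarrow> is_parent E a v w \<Longrightarrow> is_parent E a v w' \<Longrightarrow> w = w'"
  unfolding orientation_ok_def by blast

lemma oriented_path_determined_by_last:
  assumes ori: "orientation_ok V E a"
  shows "oriented_path V E a ps \<Longrightarrow> oriented_path V E a qs \<Longrightarrow> length ps = length qs
    \<Longrightarrow> last ps = last qs \<Longrightarrow> ps = qs"
proof (induction ps arbitrary: qs rule: rev_induct)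
  case (snoc x xs)
  obtain ys y where qs: "qs = ys @ [y]"
    using snoc.prems(3) by (cases qs rule: rev_cases) auto
  show ?case
  proof (cases "xs = []")
    case False
    then have "ys \<noteq> []" using snoc.prems(3) qs by auto
    then have xs: "oriented_path V E a xs" "x \<in> V" "is_parent E a x (last xs)"
      and ys: "oriented_path V E a ys" "is_parent E a x (last ys)"
      using snoc.prems False unfolding qs by (simp_all add: oriented_path_snoc)
    then have "last xs = last ys" using orientation_ok_parent_unique[OF ori] by blast
    then have "xs = ys" using snoc.IH[OF xs(1) ys(1)] snoc.prems(3) qs by simp
    then show ?thesis using snoc.prems(4) qs by simp
  qed (use snoc.prems qs in simp)
qed (simp add: oriented_path_def)

fun ancestor_path :: "('a \<Rightarrow> 'a) \<Rightarrow> 'a \<Rightarrow> nat \<Rightarrow> 'a list" where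
  "ancestor_path f v 0 = [v]"
| "ancestor_path f v (Suc k) = ancestor_path f (f v) k @ [v]"

lemma ancestor_path_ne [simp]: "ancestor_path f v k \<noteq> []"
  by (cases k) auto

lemma length_ancestor_path [simp]: "length (ancestor_path f v k) = Suc k"
  by (induction k arbitrary: v) auto

lemma last_ancestor_path [simp]: "last (ancestor_path f v k) = v"
  by (cases k) auto

section \<open>Labelling a tree by depth\<close>

lemma Suc_mod_eq_0_iff: "2 \<le> (t::nat) \<Longrightarrow> Suc x mod t = 0 \<longleftrightarrow> x mod t = t - 1"
  by (auto simp: mod_Suc)

locale depth_labeling =
  fixes V :: "'a set" and E :: "'a \<Rightarrow> 'a \<Rightarrow> bool" and r :: 'a and dep :: "'a \<Rightarrow> nat" and t :: nat
  assumes simple: "simple_graph V E" and depth: "rooted_depth V E r dep" and t: "2 \<le> t"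
begin

definition orient :: "'a \<Rightarrow> nat" where
  "orient v = dep v mod 3"

definition block :: "'a \<Rightarrow> block_label" where
  "block v = (if dep v mod t = 0 then Head else if dep v mod t = t - 1 then Tail else Mid)"

definition colour :: "'a \<Rightarrow> bool" where
  "colour v = odd (dep v div t)"

text \<open>The vertex at position i of a block stores the i-th least significant digit, in base
  2^L, of the depth of the block's head; the block value then reads off that depth.\<close>
definition digits :: "'a \<Rightarrow> bool list" where
  "digits v = (let L = dist_label_len (card V) t
     in nat_to_bits L (dep v div t * t div 2 ^ (L * (dep v mod t))))"

definition parent :: "'a \<Rightarrow> 'a" where
  "parent v = (SOME w. E v w \<and> dep w + 1 = dep v)"

lemma root: "r \<in> V" "dep r = 0"
  using depth by (simp_all add: rooted_depth_def)

lemma edge_dep: "E u v \<Longrightarrow> dep u = dep v + 1 \<or> dep v = dep u + 1"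
  using depth unfolding rooted_depth_def by blast

lemma ex1_parent: "v \<in> V \<Longrightarrow> v \<noteq> r \<Longrightarrow> \<exists>!w. E v w \<and> dep w + 1 = dep v"
  using depth unfolding rooted_depth_def by blast

lemma edge_in_V: "E u v \<Longrightarrow> u \<in> V \<and> v \<in> V"
  using simple by (simp add: simple_graph_def)

lemma is_parent_orient_iff: "is_parent E orient v w \<longleftrightarrow> E v w \<and> dep w + 1 = dep v"
proof -
  have "(dep w mod 3 + 1) mod 3 = dep v mod 3 \<longleftrightarrow> dep w + 1 = dep v" if "E v w"
    using edge_dep[OF that] by presburger
  then show ?thesis by (auto simp: is_parent_def orient_def)
qed

lemma parent: "v \<in> V \<Longrightarrow> v \<noteq> r \<Longrightarrow> E v (parent v) \<and> dep (parent v) + 1 = dep v"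
  unfolding parent_def by (rule someI_ex[OF ex1_implies_ex[OF ex1_parent]])

lemma dep_eq_0_iff: "v \<in> V \<Longrightarrow> dep v = 0 \<longleftrightarrow> v = r"
  using parent[of v] root by fastforce

lemma is_root_orient_iff: "v \<in> V \<Longrightarrow> is_root E orient v \<longleftrightarrow> v = r"
  using parent[of v] dep_eq_0_iff[of v] unfolding is_root_def is_parent_orient_iff by fastforce

lemma oriented_path_dep:
  "oriented_path V E orient ps \<Longrightarrow> i < length ps \<Longrightarrow> dep (ps ! i) = dep (hd ps) + i"
  by (induction i) (auto simp: oriented_path_def is_parent_orient_iff hd_conv_nth)

lemma oriented_ancestor_path:
  "v \<in> V \<Longrightarrow> k \<le> dep v \<Longrightarrow> oriented_path V E orient (ancestor_path parent v k)
     \<and> dep (hd (ancestor_path parent v k)) = dep v - k"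
proof (induction k arbitrary: v)
  case (Suc k)
  then have "v \<noteq> r" using root(2) by auto
  then have p: "E v (parent v)" "dep (parent v) + 1 = dep v" "parent v \<in> V"
    using parent[OF Suc.prems(1)] edge_in_V by blast+
  then show ?case using Suc.IH[OF p(3)] Suc.prems
    by (simp add: oriented_path_snoc is_parent_orient_iff hd_append)
qed simp

lemma dep_less_card: "v \<in> V \<Longrightarrow> dep v < card V"
proof -
  assume "v \<in> V"
  let ?ps = "ancestor_path parent v (dep v)"
  have path: "oriented_path V E orient ?ps" using oriented_ancestor_path[OF \<open>v \<in> V\<close>] by simp
  then have "distinct ?ps"
    unfolding distinct_conv_nth using oriented_path_dep[OF path] by (metis add_left_cancel)
  then have "Suc (dep v) = card (set ?ps)" by (simp add: distinct_card)
  also have "\<dots> \<le> card V"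
    using path simple by (intro card_mono) (auto simp: oriented_path_def simple_graph_def)
  finally show ?thesis by simp
qed

lemma block_Head_iff: "block v = Head \<longleftrightarrow> dep v mod t = 0"
  by (simp add: block_def)

lemma block_Tail_iff: "block v = Tail \<longleftrightarrow> dep v mod t = t - 1"
  using t by (simp add: block_def)

lemma block_dep:
  assumes B: "is_block V E t orient block B"
  obtains k where "length B = t" "\<And>i. i < t \<Longrightarrow> dep (B ! i) = t * k + i"
proof
  show len: "length B = t" using B by (simp add: is_block_def)
  fix i assume "i < t"
  then have "dep (B ! i) = dep (hd B) + i"
    using B len by (simp add: is_block_def oriented_path_dep)
  moreover have "dep (hd B) mod t = 0" using B by (simp add: is_block_def block_Head_iff)
  ultimately show "dep (B ! i) = t * (dep (hd B) div t) + i" by (metis add_0_right mult_div_mod_eq)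
qed

lemma block_hd_last:
  "is_block V E t orient block B \<Longrightarrow> hd B = B ! 0 \<and> last B = B ! (t - 1)"
  unfolding is_block_def oriented_path_def by (simp add: hd_conv_nth last_conv_nth)

lemma block_parent_dep:
  assumes "is_block V E t orient block B" "is_block V E t orient block B'"
    and "block_parent E orient B B'"
  shows "dep (hd B') = dep (hd B) + t"
proof -
  obtain k where "\<And>i. i < t \<Longrightarrow> dep (B ! i) = t * k + i"
    using block_dep[OF assms(1)] by blast
  then have "dep (B ! 0) = t * k" "dep (B ! (t - 1)) = t * k + (t - 1)" using t by auto
  moreover have "dep (hd B') = dep (last B) + 1"
    using assms(3) by (simp add: block_parent_def is_parent_orient_iff)
  ultimately show ?thesis using block_hd_last[OF assms(1)] t by simp
qed

lemma block_value_digits: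
  assumes B: "is_block V E t orient block B"
  shows "block_value digits B = dep (hd B)"
proof -
  define L where "L = dist_label_len (card V) t"
  define N where "N = dep (hd B)"
  obtain k where len: "length B = t" and dB: "\<And>i. i < t \<Longrightarrow> dep (B ! i) = t * k + i"
    using block_dep[OF B] by blast
  have N: "N = t * k" using dB[of 0] t block_hd_last[OF B] by (simp add: N_def)
  have "map digits B = map (\<lambda>i. nat_to_bits L (N div 2 ^ (L * i))) [0..<t]"
  proof (rule nth_equalityI)
    fix i assume "i < length (map digits B)"
    then have "i < t" using len by simp
    then have "dep (B ! i) div t * t = N" "dep (B ! i) mod t = i"
      using dB N by (simp_all add: mult.commute)
    then show "map digits B ! i = map (\<lambda>i. nat_to_bits L (N div 2 ^ (L * i))) [0..<t] ! i"
      using \<open>i < t\<close> len by (simp add: digits_def L_def Let_def)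
  qed (simp add: len)
  then have "block_value digits B = N mod 2 ^ (L * t)"
    by (simp add: block_value_def bits_val_concat_digits flip: rev_map)
  moreover have "N < 2 ^ (L * t)"
  proof -
    have "hd B \<in> V" using B by (auto simp: is_block_def oriented_path_def)
    then have "N < card V" using dep_less_card by (simp add: N_def)
    then show ?thesis using le_two_pow_dist_label_len[of "card V" t] t by (simp add: L_def)
  qed
  ultimately show ?thesis by (simp add: N_def)
qed

lemma orientation_ok_orient: "orientation_ok V E orient"
  unfolding orientation_ok_def
proof (intro ballI conjI allI impI)
  fix v assume "v \<in> V"
  show "orient v < 3" by (simp add: orient_def)
  show "w1 = w2" if "is_parent E orient v w1 \<and> is_parent E orient v w2" for w1 w2
  proof -
    have "v \<noteq> r" using that root(2) by (auto simp: is_parent_orient_iff)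
    then show ?thesis using that ex1_parent[OF \<open>v \<in> V\<close>] by (auto simp: is_parent_orient_iff)
  qed
  show "orient w = (orient v + 1) mod 3" if "E v w \<and> \<not> is_parent E orient v w" for w
    using that edge_dep[of v w] by (auto simp: is_parent_orient_iff orient_def mod_Suc_eq)
qed

lemma block_Head_iff_parent_Tail:
  assumes "v \<in> V"
  shows "block v = Head \<longleftrightarrow> is_root E orient v \<or> (\<exists>w. is_parent E orient v w \<and> block w = Tail)"
proof (cases "v = r")
  case True
  then show ?thesis using assms root by (simp add: is_root_orient_iff block_Head_iff)
next
  case False
  then have "is_parent E orient v w \<longleftrightarrow> w = parent v" for w
    using parent[OF assms] ex1_parent[OF assms] by (auto simp: is_parent_orient_iff)
  moreover have "dep v = Suc (dep (parent v))" using parent[OF assms False] by simp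
  then have "dep v mod t = 0 \<longleftrightarrow> dep (parent v) mod t = t - 1"
    by (simp only: Suc_mod_eq_0_iff[OF t])
  ultimately show ?thesis
    using assms False by (simp add: is_root_orient_iff block_Head_iff block_Tail_iff)
qed

lemma block_Tail_iff_block_end:
  assumes "v \<in> V"
  shows "block v = Tail \<longleftrightarrow> (\<exists>B. is_block V E t orient block B \<and> last B = v)"
proof
  assume "block v = Tail"
  then have v: "dep v mod t = t - 1" by (simp add: block_Tail_iff)
  then have "t - 1 \<le> dep v" by (metis mod_less_eq_dividend)
  moreover have "(dep v - (t - 1)) mod t = 0"
    using v by (metis add_diff_cancel_right' minus_mod_eq_mult_div mod_mult_self1_is_0)
  ultimately have "is_block V E t orient block (ancestor_path parent v (t - 1))"
    using oriented_ancestor_path[OF assms] t by (simp add: is_block_def block_Head_iff)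
  then show "\<exists>B. is_block V E t orient block B \<and> last B = v" by fastforce
next
  assume "\<exists>B. is_block V E t orient block B \<and> last B = v"
  then obtain B k where "last B = v" and B: "is_block V E t orient block B"
    and dB: "\<And>i. i < t \<Longrightarrow> dep (B ! i) = t * k + i"
    using block_dep by metis
  then have "dep v = (t - 1) + k * t"
    using block_hd_last[OF B] dB[of "t - 1"] t by (simp add: mult.commute)
  then have "dep v mod t = (t - 1) mod t" by (simp only: mod_mult_self1)
  then show "block v = Tail" using t by (simp add: block_Tail_iff)
qed

lemma block_Head_ancestor_within_t:
  assumes "v \<in> V"
  shows "\<exists>ps. oriented_path V E orient ps \<and> length ps \<le> t \<and> last ps = v \<and> block (hd ps) = Head"
proof -
  let ?ps = "ancestor_path parent v (dep v mod t)"
  have "oriented_path V E orient ?ps" "dep (hd ?ps) = t * (dep v div t)"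
    using oriented_ancestor_path[OF assms, of "dep v mod t"]
    by (simp_all add: minus_mod_eq_mult_div)
  moreover have "length ?ps \<le> t" using t by (simp add: Suc_le_eq)
  ultimately show ?thesis by (auto simp: block_Head_iff)
qed

lemma block_labels_ok_block: "block_labels_ok V E t orient block"
  unfolding block_labels_ok_def
proof (intro ballI conjI)
  fix v assume "v \<in> V"
  then show "block v = Head \<longleftrightarrow> is_root E orient v \<or> (\<exists>w. is_parent E orient v w \<and> block w = Tail)"
    and "block v = Tail \<longleftrightarrow> (\<exists>B. is_block V E t orient block B \<and> last B = v)"
    and "\<exists>ps. oriented_path V E orient ps \<and> length ps \<le> t \<and> last ps = v \<and> block (hd ps) = Head"
    by (simp_all add: block_Head_iff_parent_Tail block_Tail_iff_block_end
        block_Head_ancestor_within_t)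
  show "block v = Mid \<longleftrightarrow> \<not> block v = Head \<and> \<not> block v = Tail"
    by (cases "block v") simp_all
qed

lemma block_coloring_ok_colour: "block_coloring_ok V E t orient block colour"
proof -
  have colour: "colour u = odd (dep (hd B) div t)"
    if B: "is_block V E t orient block B" and u: "u \<in> set B" for B u
  proof -
    obtain k where len: "length B = t" and dB: "\<And>i. i < t \<Longrightarrow> dep (B ! i) = t * k + i"
      using block_dep[OF B] by blast
    have "dep (B ! i) div t = k" if "i < t" for i using dB[OF that] that by simp
    moreover obtain i where "i < t" "u = B ! i" using u len by (auto simp: in_set_conv_nth)
    ultimately show ?thesis using block_hd_last[OF B] t by (simp add: colour_def)
  qed
  show ?thesis
    unfolding block_coloring_ok_def using colour block_parent_dep t by auto
qed

lemma distance_labels_ok_digits: "distance_labels_ok V E t orient block digits"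
  unfolding distance_labels_ok_def
proof (intro conjI allI impI ballI)
  fix B assume B: "is_block V E t orient block B"
  then have "hd B \<in> V" by (auto simp: is_block_def oriented_path_def)
  then show "block_value digits B = 0 \<longleftrightarrow> is_root E orient (hd B)"
    by (simp add: block_value_digits[OF B] dep_eq_0_iff is_root_orient_iff)
qed (auto simp: digits_def Let_def block_value_digits block_parent_dep)

lemma correct_acyclicity_labeling: "correct_acyclicity_labeling V E t orient block colour digits"
  unfolding correct_acyclicity_labeling_def
  using orientation_ok_orient block_labels_ok_block block_coloring_ok_colour
    distance_labels_ok_digits by blast

end

section \<open>Cycles\<close>

lemma periodic_add_mult:
  fixes k :: nat
  assumes "\<And>i. f (i + m) = f i"
  shows "f (i + m * k) = f i"
proof (induction k)
  case (Suc k)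
  then show ?case using assms[of "i + m * k"] by (simp add: algebra_simps)
qed simp

lemma cycle_closed_walk:
  assumes "is_cycle V E cs"
  obtains f m where "3 \<le> m" "\<And>i. f i \<in> V" "\<And>i. E (f i) (f (Suc i))"
    "\<And>i. f (Suc (Suc i)) \<noteq> f i" "\<And>i. f (i + m) = f i"
proof
  let ?m = "length cs" and ?f = "\<lambda>i. cs ! (i mod length cs)"
  show m: "3 \<le> ?m" using assms by (simp add: is_cycle_def)
  then have idx: "i mod ?m < ?m" for i by (intro mod_less_divisor) linarith
  show "?f i \<in> V" for i using assms idx[of i] by (auto simp: is_cycle_def)
  show "E (?f i) (?f (Suc i))" for i
  proof -
    have "Suc (i mod ?m) mod ?m = Suc i mod ?m" by (simp add: mod_Suc_eq)
    then show ?thesis using assms idx[of i] unfolding is_cycle_def by (metis Suc_eq_plus1)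
  qed
  show "?f (Suc (Suc i)) \<noteq> ?f i" for i
  proof
    assume "?f (Suc (Suc i)) = ?f i"
    then have "Suc (Suc i) mod ?m = i mod ?m"
      using assms idx by (simp add: is_cycle_def nth_eq_iff_index_eq)
    then have "?m dvd 2" using mod_eq_dvd_iff_nat[of i "Suc (Suc i)" ?m] by simp
    then show False using m by (auto dest: dvd_imp_le)
  qed
  show "?f (i + ?m) = ?f i" for i by simp
qed

lemma periodic_reverse:
  assumes per: "\<And>i. f (i + m) = f i" and m: "0 < m" and step: "\<And>i. R (f i) (f (Suc i))"
  obtains g where "\<And>i. R (g (Suc i)) (g i)" "\<And>i. g (i + m) = g i" "\<And>i. g i \<in> range f"
proof
  let ?g = "\<lambda>i. f (m - i mod m)"
  show "R (?g (Suc i)) (?g i)" for i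
  proof (cases "Suc (i mod m) < m")
    case True
    then have "m - i mod m = Suc (m - Suc i mod m)" by (simp add: mod_Suc)
    then show ?thesis using step by simp
  next
    case False
    moreover have "i mod m < m" using m by simp
    ultimately have "Suc i mod m = 0" "m - i mod m = Suc 0" by (simp_all add: mod_Suc)
    then show ?thesis using step[of 0] per[of 0] by simp
  qed
  show "?g (i + m) = ?g i" "?g i \<in> range f" for i by simp_all
qed

lemma closed_walk_consistently_oriented:
  assumes ori: "orientation_ok V E a" and sym: "\<And>u v. E u v \<Longrightarrow> E v u"
    and V: "\<And>i. f i \<in> V" and walk: "\<And>i. E (f i) (f (Suc i))"
    and no_backtrack: "\<And>i. f (Suc (Suc i)) \<noteq> f i" and per: "\<And>i. f (i + m) = f i" and "0 < m"
  shows "(\<forall>i. is_parent E a (f (Suc i)) (f i)) \<or> (\<forall>i. is_parent E a (f i) (f (Suc i)))"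
proof -
  define fw where "fw i \<longleftrightarrow> is_parent E a (f (Suc i)) (f i)" for i
  have edge: "fw i \<or> is_parent E a (f i) (f (Suc i))" for i
  proof -
    have "a (f (Suc i)) = (a (f i) + 1) mod 3" if "\<not> is_parent E a (f i) (f (Suc i))"
      using ori V[of i] walk[of i] that unfolding orientation_ok_def by blast
    then show ?thesis using walk[of i] sym[OF walk[of i]] unfolding fw_def is_parent_def by auto
  qed
  \<comment> \<open>Turning around would give f (Suc i) the two parents f i and f (Suc (Suc i)).\<close>
  have fw_Suc: "fw (Suc i)" if "fw i" for i
  proof (rule ccontr)
    assume "\<not> fw (Suc i)"
    then have "is_parent E a (f (Suc i)) (f (Suc (Suc i)))" using edge by blast
    then have "f (Suc (Suc i)) = f i"
      using that orientation_ok_parent_unique[OF ori V] by (simp add: fw_def)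
    then show False using no_backtrack by blast
  qed
  have fw_add: "fw (j + k)" if "fw j" for j k
    by (induction k) (simp_all add: that fw_Suc)
  show ?thesis
  proof (cases "\<exists>j. fw j")
    case True
    then obtain j where "fw j" by blast
    have "fw i" for i
    proof -
      have "j \<le> i + m * Suc j" using \<open>0 < m\<close> by (simp add: trans_le_add2)
      then have "fw (i + m * Suc j)" using fw_add[OF \<open>fw j\<close>] by (metis le_add_diff_inverse)
      moreover have "f (i + m * Suc j) = f i" "f (Suc i + m * Suc j) = f (Suc i)"
        using periodic_add_mult[of f m, OF per] by blast+
      ultimately show ?thesis by (simp add: fw_def del: mult_Suc_right)
    qed
    then show ?thesis by (simp add: fw_def)
  next
    case False
    then show ?thesis using edge by blast
  qed
qed

definition segment :: "(nat \<Rightarrow> 'a) \<Rightarrow> nat \<Rightarrow> nat \<Rightarrow> 'a list" where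
  "segment s n k = map (\<lambda>i. s (n + i)) [0..<k]"

lemma segment_simps:
  assumes "0 < k"
  shows "length (segment s n k) = k" "hd (segment s n k) = s n"
    and "last (segment s n k) = s (n + (k - 1))"
  using assms by (simp_all add: segment_def hd_map last_map)

lemma block_labels_okD:
  assumes "block_labels_ok V E t a b" "v \<in> V"
  shows "is_parent E a v w \<Longrightarrow> b w = Tail \<Longrightarrow> b v = Head"
    and "is_block V E t a b B \<Longrightarrow> last B = v \<Longrightarrow> b v = Tail"
    and "\<exists>ps. oriented_path V E a ps \<and> length ps \<le> t \<and> last ps = v \<and> b (hd ps) = Head"
  using assms unfolding block_labels_ok_def by blast+

context
  fixes V E t a b and s :: "nat \<Rightarrow> 'a"
  assumes ori: "orientation_ok V E a" and bl: "block_labels_ok V E t a b"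
    and s_in_V: "\<And>i. s i \<in> V" and chain: "\<And>i. is_parent E a (s (Suc i)) (s i)"
begin

lemma oriented_path_segment: "0 < k \<Longrightarrow> oriented_path V E a (segment s n k)"
  using s_in_V chain by (auto simp: oriented_path_def segment_def)

lemma parent_chain_has_Head: "\<exists>h. b (s h) = Head"
proof -
  \<comment> \<open>Parents are unique, so the head path that the block labels provide for s t is a
    segment of the chain.\<close>
  obtain ps where ps: "oriented_path V E a ps" "length ps \<le> t" "last ps = s t" "b (hd ps) = Head"
    using block_labels_okD(3)[OF bl s_in_V] by blast
  define k where "k = length ps"
  have "0 < k" "k \<le> t" using ps(1,2) by (simp_all add: k_def oriented_path_def)
  moreover have "Suc t - k + (k - 1) = t" using \<open>0 < k\<close> \<open>k \<le> t\<close> by simp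
  ultimately have "length (segment s (Suc t - k) k) = length ps"
    and "last (segment s (Suc t - k) k) = last ps"
    using segment_simps[of k s "Suc t - k"] ps(3) by (simp_all add: k_def)
  then have "ps = segment s (Suc t - k) k"
    using oriented_path_determined_by_last[OF ori ps(1) oriented_path_segment[OF \<open>0 < k\<close>]]
    by simp
  then show ?thesis using ps(4) segment_simps(2)[OF \<open>0 < k\<close>] by metis
qed

lemma parent_chain_blocks:
  assumes "b (s h) = Head" "0 < t"
  shows "is_block V E t a b (segment s (h + j * t) t)"
proof (induction j)
  case 0
  then show ?case
    using assms oriented_path_segment by (simp add: is_block_def segment_simps)
next
  case (Suc j)
  have "b (s (h + j * t + (t - 1))) = Tail"
    using block_labels_okD(2)[OF bl s_in_V Suc] assms(2) by (simp add: segment_simps)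
  moreover have "is_parent E a (s (h + Suc j * t)) (s (h + j * t + (t - 1)))"
    using chain[of "h + j * t + (t - 1)"] assms(2) by (simp add: algebra_simps)
  ultimately have "b (s (h + Suc j * t)) = Head"
    using block_labels_okD(1)[OF bl s_in_V] by blast
  then show ?case
    using assms oriented_path_segment by (simp add: is_block_def segment_simps)
qed

lemma parent_chain_not_periodic:
  assumes dl: "distance_labels_ok V E t a b d" and "0 < t" and "0 < m"
  shows "\<not> (\<forall>i. s (i + m) = s i)"
proof
  assume per: "\<forall>i. s (i + m) = s i"
  obtain h where "b (s h) = Head" using parent_chain_has_Head by blast
  define B where "B j = segment s (h + j * t) t" for j
  have block: "is_block V E t a b (B j)" for j
    using parent_chain_blocks[OF \<open>b (s h) = Head\<close> \<open>0 < t\<close>] by (simp add: B_def)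
  have "block_parent E a (B j) (B (Suc j))" for j
    using chain[of "h + j * t + (t - 1)"] \<open>0 < t\<close>
    by (simp add: B_def block_parent_def segment_simps algebra_simps)
  then have "block_value d (B (Suc j)) = block_value d (B j) + t" for j
    using dl block unfolding distance_labels_ok_def by blast
  then have "block_value d (B j) = block_value d (B 0) + j * t" for j
    by (induction j) simp_all
  moreover have "B m = B 0"
  proof -
    have "s (h + m * t + i) = s (h + i)" for i
      using periodic_add_mult[of s m "h + i" t] per by (simp add: algebra_simps)
    then show ?thesis by (simp add: B_def segment_def)
  qed
  ultimately show False using \<open>0 < t\<close> \<open>0 < m\<close> by (metis add_cancel_left_right mult_is_0 not_gr0)
qed

end

lemma labeled_graph_acyclic:
  assumes sg: "simple_graph V E" and "0 < t"
    and lab: "correct_acyclicity_labeling V E t a b c d"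
  shows "acyclic_graph V E"
  unfolding acyclic_graph_def
proof
  assume "\<exists>cs. is_cycle V E cs"
  then obtain f m where "0 < m" and f_in_V: "\<And>i. f i \<in> V" and walk: "\<And>i. E (f i) (f (Suc i))"
    and no_backtrack: "\<And>i. f (Suc (Suc i)) \<noteq> f i" and per: "\<And>i. f (i + m) = f i"
    by (metis cycle_closed_walk less_le_trans zero_less_numeral)
  have ori: "orientation_ok V E a" and bl: "block_labels_ok V E t a b"
    and dl: "distance_labels_ok V E t a b d"
    using lab by (simp_all add: correct_acyclicity_labeling_def)
  have sym: "\<And>u v. E u v \<Longrightarrow> E v u" using sg by (simp add: simple_graph_def)
  obtain s where "\<And>i. s i \<in> V" "\<And>i. is_parent E a (s (Suc i)) (s i)" "\<And>i. s (i + m) = s i"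
  proof (cases "\<forall>i. is_parent E a (f (Suc i)) (f i)")
    case True
    then show ?thesis using that f_in_V per by blast
  next
    case False
    then have "\<And>i. is_parent E a (f i) (f (Suc i))"
      using closed_walk_consistently_oriented[where f = f, OF ori sym f_in_V walk no_backtrack per
          \<open>0 < m\<close>] by blast
    then obtain g where g: "\<And>i. is_parent E a (g (Suc i)) (g i)" "\<And>i. g (i + m) = g i"
      and "\<And>i. g i \<in> range f"
      using periodic_reverse[where f = f and R = "is_parent E a", OF per \<open>0 < m\<close>] by blast
    then have "\<And>i. g i \<in> V" using f_in_V by (metis rangeE)
    then show ?thesis using that g by blast
  qed
  then show False using parent_chain_not_periodic[OF ori bl _ _ dl \<open>0 < t\<close> \<open>0 < m\<close>] by blast
qed

lemma tree_has_acyclicity_labeling: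
  assumes "simple_graph V E" "connected_graph V E" "acyclic_graph V E" "2 \<le> t"
  shows "\<exists>a b c d. correct_acyclicity_labeling V E t a b c d"
proof (cases "V = {}")
  case True
  then have "correct_acyclicity_labeling V E t (\<lambda>_. 0) (\<lambda>_. Head) (\<lambda>_. True) (\<lambda>_. [])"
    by (simp add: correct_acyclicity_labeling_def orientation_ok_def block_labels_ok_def
        block_coloring_ok_def distance_labels_ok_def is_block_def oriented_path_def)
  then show ?thesis by blast
next
  case False
  then obtain r dep where "rooted_depth V E r dep"
    using tree_has_rooted_depth assms by blast
  then interpret depth_labeling V E r dep t
    using assms by unfold_locales
  show ?thesis using correct_acyclicity_labeling by blast
qed

theorem proposition2:
  fixes V :: "'a set" and E :: "'a \<Rightarrow> 'a \<Rightarrow> bool" and t :: nat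
  assumes "simple_graph V E" and "connected_graph V E" and "2 \<le> t"
  shows "acyclic_graph V E \<longleftrightarrow> (\<exists>a b c d. correct_acyclicity_labeling V E t a b c d)"
proof
  assume "acyclic_graph V E"
  then show "\<exists>a b c d. correct_acyclicity_labeling V E t a b c d"
    using tree_has_acyclicity_labeling assms by blast
next
  assume "\<exists>a b c d. correct_acyclicity_labeling V E t a b c d"
  then obtain a b c d where "correct_acyclicity_labeling V E t a b c d" by blast
  moreover have "0 < t" using assms(3) by simp
  ultimately show "acyclic_graph V E" using labeled_graph_acyclic[OF assms(1)] by blast
qed

end
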